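(* The set $\mathbb Q^+$ of positive rational numbers, canonically arranged as below, has size sequence $$\sigma(\mathbb Q^+)=(\alpha+1)\cdot\sigma(\mathbb I),\quad\text{i.e. } \sigma_n(\mathbb Q^+)=(n+1)\Phi(n),$$ where $\Phi(n)=\sum_{i=1}^n\varphi(i)$ with $\varphi$ Euler's totient function; moreover $\sigma(\mathbb Q^+)\approx_\mathcal F\alpha^3$, and more precisely $$\tfrac{3}{10}(\alpha^3+\alpha^2)<_\mathcal F\sigma(\mathbb Q^+)<_\mathcal F\frac{\alpha^3-\alpha}{2}.$$
   Context: $\mathbb N=\{1,2,\dots\}$. Every positive rational is uniquely written as a mixed fraction $p+k/m$ with $p\in\mathbb N_0$, $k,m\in\mathbb N$, $\gcd(k,m)=1$, $k\le m$, and is represented by the triple $(p,k,m)$; thus $\mathbb Q^+=\mathbb N_0\times\mathbb I$ where $\mathbb I=(0,1]\cap\mathbb Q$ is represented by the pairs $(k,m)$. Arrangements: $\mathbb N_0$ has first component $\{0,1\}$ and $n$-th component $\{n\}$ for $n\ge2$; $\mathbb I$ has $n$-th component $\{(k,n):\gcd(k,n)=1,k\le n\}$; a product $A\times B$ has $n$-th component $\bigcup\{A_i\times B_j:\max\{i,j\}=n\}$. Hence the triple $(p,k,m)$ lies in component $\max\{\ell(p),m\}$ where $\ell(0)=1$ and $\ell(p)=p$ for $p\ge1$. The size sequence is $\sigma(A)=(\sigma_n(A))_n$, $\sigma_n(A)=|A_1|+\dots+|A_n|$. $\alpha=(n)_n$; operations on sequences are componentwise; constants are identified with constant sequences. $(a_n)<_\mathcal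 F(b_n)$ iff $a_n<b_n$ for all sufficiently large $n$; $(a_n)\approx_\mathcal F(b_n)$ iff some $k\in\mathbb N$ has $ka_n\ge b_n$ for all large $n$ and some $k$ has $kb_n\ge a_n$ for all large $n$. *)

theory Defs
  imports "HOL-Number_Theory.Number_Theory"
begin

text \<open>An arrangement is a sequence of components A 1, A 2, ... (index 0 unused).\<close>

definition N0_arr :: "nat \<Rightarrow> nat set" where
  "N0_arr n = (if n = 1 then {0, 1} else if n \<ge> 2 then {n} else {})"

text \<open>The unit-interval rationals (0,1] as pairs (k,m), gcd k m = 1, 1 <= k <= m;
  the n-th component consists of those with denominator n.\<close>
definition I_arr :: "nat \<Rightarrow> (nat \<times> nat) set" where
  "I_arr n = {(k, m). m = n \<and> 1 \<le> k \<and> k \<le> m \<and> coprime k m}"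

definition prod_arr :: "(nat \<Rightarrow> 'a set) \<Rightarrow> (nat \<Rightarrow> 'b set) \<Rightarrow> nat \<Rightarrow> ('a \<times> 'b) set" where
  "prod_arr A B n = \<Union>{A i \<times> B j | i j. 1 \<le> i \<and> 1 \<le> j \<and> max i j = n}"

text \<open>Q+ = N0 x I, triples (p,(k,m)) standing for p + k/m.\<close>
definition Qpos_arr :: "nat \<Rightarrow> (nat \<times> nat \<times> nat) set" where
  "Qpos_arr = prod_arr N0_arr I_arr"

definition size_seq :: "(nat \<Rightarrow> 'a set) \<Rightarrow> nat \<Rightarrow> nat" where
  "size_seq A n = (\<Sum>i = 1..n. card (A i))"

definition F_less :: "(nat \<Rightarrow> real) \<Rightarrow> (nat \<Rightarrow> real) \<Rightarrow> bool" where
  "F_less a b \<longleftrightarrow> (\<forall>\<^sub>F n in sequentially. a n < b n)"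

definition F_approx :: "(nat \<Rightarrow> real) \<Rightarrow> (nat \<Rightarrow> real) \<Rightarrow> bool" where
  "F_approx a b \<longleftrightarrow>
     (\<exists>k::nat. k \<ge> 1 \<and> (\<forall>\<^sub>F n in sequentially. real k * a n \<ge> b n)) \<and>
     (\<exists>k::nat. k \<ge> 1 \<and> (\<forall>\<^sub>F n in sequentially. real k * b n \<ge> a n))"

end

theory Submission
  imports Defs "HOL-Analysis.Gamma_Function" "HOL-Library.Log_Nat" "HOL-Real_Asymp.Real_Asymp"
begin

(* For arrangements with finite, pairwise disjoint components, the first n components of a
   product arrangement form the product of the first n components of the factors, so size
   sequences multiply.  Since sigma_n(N0) = n + 1 and I_n has totient n elements, this gives
   sigma_n(Q+) = (n + 1) Phi(n) with Phi(n) = totient 1 + ... + totient n.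

   The upper bound comes from totient i <= i - 1, which is strict for i = 4 and i = 6.
   For the lower bound, grouping the fractions k/m with k <= m <= n by d = gcd k m gives
   Phi(n/1) + Phi(n/2) + ... + Phi(n/n) = n (n + 1) / 2 (integer division).  Inserting a bound
   Phi(m) <= u m^2/2 + O(m log^j m) into the terms d >= 2 yields
   Phi(n) >= (1 - sigma u) n^2/2 - O(n log^(j+1) n) with sigma = sum_{d>=2} 1/d^2 = pi^2/6 - 1,
   and symmetrically lower bounds give upper bounds.  Iterating from the trivial u = 1, the
   coefficients approach 1 / (1 + sigma) = 6 / pi^2 > 3/5; five rounds suffice. *)

section \<open>Size sequences of product arrangements\<close>

lemma size_seq_eq_card_UN:
  assumes "\<And>i. finite (A i)" and "disjoint_family_on A {1..}"
  shows "size_seq A n = card (\<Union>i\<in>{1..n}. A i)"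
  unfolding size_seq_def using assms
  by (subst card_UN_disjoint) (auto simp: disjoint_family_on_def)

lemma UN_prod_arr:
  "(\<Union>i\<in>{1..n}. prod_arr A B i) = (\<Union>i\<in>{1..n}. A i) \<times> (\<Union>j\<in>{1..n}. B j)"
proof
  show "(\<Union>i\<in>{1..n}. prod_arr A B i) \<subseteq> (\<Union>i\<in>{1..n}. A i) \<times> (\<Union>j\<in>{1..n}. B j)"
    by (fastforce simp: prod_arr_def)
next
  show "(\<Union>i\<in>{1..n}. A i) \<times> (\<Union>j\<in>{1..n}. B j) \<subseteq> (\<Union>i\<in>{1..n}. prod_arr A B i)"
  proof clarify
    fix a b i j assume "i \<in> {1..n}" "a \<in> A i" "j \<in> {1..n}" "b \<in> B j"
    then have "(a, b) \<in> prod_arr A B (max i j)" "max i j \<in> {1..n}"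
      by (auto simp: prod_arr_def)
    then show "(a, b) \<in> (\<Union>i\<in>{1..n}. prod_arr A B i)" by blast
  qed
qed

lemma finite_prod_arr:
  assumes "\<And>i. finite (A i)" and "\<And>j. finite (B j)"
  shows "finite (prod_arr A B n)"
proof (rule finite_subset)
  show "prod_arr A B n \<subseteq> (\<Union>i\<in>{1..n}. A i) \<times> (\<Union>j\<in>{1..n}. B j)"
    by (fastforce simp: prod_arr_def)
qed (use assms in auto)

lemma disjoint_family_on_prod_arr:
  assumes A: "disjoint_family_on A {1..}" and B: "disjoint_family_on B {1..}"
  shows "disjoint_family_on (prod_arr A B) {1..}"
  unfolding disjoint_family_on_def
proof (intro ballI impI)
  fix i j :: nat assume "i \<noteq> j"
  show "prod_arr A B i \<inter> prod_arr A B j = {}"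
  proof (rule ccontr)
    assume "prod_arr A B i \<inter> prod_arr A B j \<noteq> {}"
    then obtain a b where "(a, b) \<in> prod_arr A B i" "(a, b) \<in> prod_arr A B j"
      by auto
    then obtain p q p' q' where
      "a \<in> A p" "b \<in> B q" "1 \<le> p" "1 \<le> q" "max p q = i"
      "a \<in> A p'" "b \<in> B q'" "1 \<le> p'" "1 \<le> q'" "max p' q' = j"
      unfolding prod_arr_def by blast
    moreover from this have "p = p'" "q = q'"
      using disjoint_family_onD[OF A, of p p'] disjoint_family_onD[OF B, of q q'] by auto
    ultimately show False using \<open>i \<noteq> j\<close> by simp
  qed
qed

lemma size_seq_prod_arr:
  assumes "\<And>i. finite (A i)" "disjoint_family_on A {1..}"
    and "\<And>j. finite (B j)" "disjoint_family_on B {1..}"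
  shows "size_seq (prod_arr A B) n = size_seq A n * size_seq B n"
proof -
  have "size_seq (prod_arr A B) n = card (\<Union>i\<in>{1..n}. prod_arr A B i)"
    using assms by (intro size_seq_eq_card_UN finite_prod_arr disjoint_family_on_prod_arr)
  also have "\<dots> = card (\<Union>i\<in>{1..n}. A i) * card (\<Union>j\<in>{1..n}. B j)"
    by (simp only: UN_prod_arr card_cartesian_product)
  also have "\<dots> = size_seq A n * size_seq B n"
    using assms by (simp only: size_seq_eq_card_UN)
  finally show ?thesis .
qed

lemma disjoint_family_on_N0_arr: "disjoint_family_on N0_arr {1..}"
  by (auto simp: disjoint_family_on_def N0_arr_def)

lemma size_seq_N0_arr:
  assumes "1 \<le> n"
  shows "size_seq N0_arr n = n + 1"
proof -
  have "(\<Union>i\<in>{1..n}. N0_arr i) = {0..n}"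
    using assms by (auto simp: N0_arr_def split: if_splits)
  moreover have "finite (N0_arr i)" for i
    by (simp add: N0_arr_def)
  ultimately show ?thesis
    by (simp add: size_seq_eq_card_UN[OF _ disjoint_family_on_N0_arr])
qed

lemma card_I_arr: "card (I_arr n) = totient n"
proof -
  have "I_arr n = (\<lambda>k. (k, n)) ` totatives n"
    by (auto simp: I_arr_def totatives_def)
  then show ?thesis
    by (simp add: card_image inj_on_def totient_def)
qed

lemma finite_I_arr: "finite (I_arr n)"
  by (rule finite_subset[of _ "{0..n} \<times> {n}"]) (auto simp: I_arr_def)

lemma disjoint_family_on_I_arr: "disjoint_family_on I_arr {1..}"
  by (auto simp: disjoint_family_on_def I_arr_def)

lemma size_seq_I_arr: "size_seq I_arr n = (\<Sum>i = 1..n. totient i)"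
  by (simp add: size_seq_def card_I_arr)

lemma size_seq_Qpos_arr:
  assumes "1 \<le> n"
  shows "size_seq Qpos_arr n = (n + 1) * size_seq I_arr n"
proof -
  have "size_seq Qpos_arr n = size_seq N0_arr n * size_seq I_arr n"
    unfolding Qpos_arr_def
    by (rule size_seq_prod_arr[OF _ disjoint_family_on_N0_arr finite_I_arr disjoint_family_on_I_arr])
      (simp add: N0_arr_def)
  then show ?thesis
    using assms by (simp add: size_seq_N0_arr)
qed

section \<open>The summatory totient function\<close>

definition totient_sum :: "nat \<Rightarrow> nat" where
  "totient_sum n = (\<Sum>i = 1..n. totient i)"

lemma totient_sum_Suc: "totient_sum (Suc n) = totient_sum n + totient (Suc n)"
  by (simp add: totient_sum_def)

lemma totient_sum_Suc_div:
  "totient_sum (Suc n div d) =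
     totient_sum (n div d) + (if d dvd Suc n then totient (Suc n div d) else 0)"
proof (cases "d dvd Suc n")
  case True
  then have "Suc n div d = Suc (n div d)"
    by (simp add: div_Suc dvd_eq_mod_eq_0)
  with True show ?thesis by (simp add: totient_sum_Suc)
next
  case False
  then have "Suc n div d = n div d"
    by (simp add: div_Suc dvd_eq_mod_eq_0)
  with False show ?thesis by simp
qed

lemma sum_totient_div_self: "(\<Sum>d | d dvd n. totient (n div d)) = n"
proof (cases "n = 0")
  case False
  have "(\<Sum>d | d dvd n. totient (n div d)) = (\<Sum>d | d dvd n. totient d)"
    using False by (intro sum.reindex_bij_witness[of _ "(div) n" "(div) n"]) (auto elim!: dvdE)
  also have "\<dots> = n"
    by (rule totient_divisor_sum)
  finally show ?thesis .
qed simp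

lemma sum_totient_sum_div: "(\<Sum>d = 1..n. totient_sum (n div d)) = (\<Sum>i = 1..n. i)"
proof (induction n)
  case (Suc n)
  have divisors: "{d. d dvd Suc n} = {d \<in> {1..Suc n}. d dvd Suc n}"
    by (auto dest: dvd_imp_le intro: Suc_leI dvd_pos_nat)
  have "(\<Sum>d = 1..Suc n. totient_sum (Suc n div d))
      = (\<Sum>d = 1..Suc n. totient_sum (n div d))
        + (\<Sum>d = 1..Suc n. if d dvd Suc n then totient (Suc n div d) else 0)"
    by (simp add: totient_sum_Suc_div sum.distrib)
  also have "(\<Sum>d = 1..Suc n. totient_sum (n div d)) = (\<Sum>d = 1..n. totient_sum (n div d))"
    by (simp add: totient_sum_def)
  also have "(\<Sum>d = 1..Suc n. if d dvd Suc n then totient (Suc n div d) else 0)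
      = (\<Sum>d | d dvd Suc n. totient (Suc n div d))"
    unfolding divisors by (rule sum.inter_filter[symmetric]) simp
  also have "\<dots> = Suc n"
    by (rule sum_totient_div_self)
  finally show ?case
    using Suc.IH by simp
qed simp

lemma totient_sum_upper_bound:
  assumes "6 \<le> n"
  shows "2 * totient_sum n + 6 \<le> n * (n - 1)"
  using assms
proof (induction n rule: dec_induct)
  case base
  have "totient 3 \<le> 2" "totient 5 \<le> 4"
    using totient_less[of 3] totient_less[of 5] by simp_all
  moreover have "{1..6::nat} = {1, 2, 3, 4, 5, 6}"
    by auto
  ultimately show ?case
    by (simp add: totient_sum_def)
next
  case (step n)
  have "totient (Suc n) \<le> n"
    using totient_less[of "Suc n"] step.hyps by simp
  with step.IH show ?case
    by (cases n) (simp_all add: totient_sum_Suc algebra_simps)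
qed

lemma totient_sum_le: "real (totient_sum m) \<le> real m ^ 2 / 2 + real m"
proof -
  have "totient_sum m \<le> (\<Sum>i = 1..m. i)"
    unfolding totient_sum_def by (intro sum_mono totient_le)
  then have "2 * real (totient_sum m) \<le> 2 * (\<Sum>i = 1..m. real i)"
    by (simp flip: of_nat_sum)
  also have "\<dots> = real m * (real m + 1)"
    using double_gauss_sum_from_Suc_0[where 'a = real, of m] by simp
  finally show ?thesis
    by (simp add: power2_eq_square field_simps)
qed

section \<open>Sums of inverse squares\<close>

definition inv_sq_sum :: "nat \<Rightarrow> real" where
  "inv_sq_sum n = (\<Sum>d = 2..n. 1 / real d ^ 2)"

definition inv_sq_lim :: real where
  "inv_sq_lim = pi\<^sup>2 / 6 - 1"

lemma inv_sq_sum_Suc: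
  "inv_sq_sum (Suc n) = inv_sq_sum n + (if n = 0 then 0 else 1 / real (Suc n) ^ 2)"
proof (cases n)
  case (Suc m)
  then have "{2..Suc n} = insert (Suc n) {2..n}"
    by auto
  with Suc show ?thesis
    by (simp add: inv_sq_sum_def)
qed (simp add: inv_sq_sum_def)

lemma incseq_inv_sq_sum: "incseq inv_sq_sum"
  by (rule incseq_SucI) (simp add: inv_sq_sum_Suc)

lemma inv_sq_sum_tendsto: "inv_sq_sum \<longlonglongrightarrow> inv_sq_lim"
proof -
  have "(\<lambda>n. (\<Sum>k<n. 1 / real (Suc k) ^ 2) - 1) \<longlonglongrightarrow> inv_sq_lim"
    unfolding inv_sq_lim_def
    using inverse_squares_sums by (intro tendsto_diff) (simp_all add: sums_def)
  moreover have "(\<Sum>k<n. 1 / real (Suc k) ^ 2) - 1 = inv_sq_sum n" if "1 \<le> n" for n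
  proof -
    have "(\<Sum>k<n. 1 / real (Suc k) ^ 2) = (\<Sum>d = 1..n. 1 / real d ^ 2)"
      by (rule sum_bounds_lt_plus1)
    also have "\<dots> = 1 + inv_sq_sum n"
      using that by (simp add: sum.atLeast_Suc_atMost inv_sq_sum_def numeral_2_eq_2)
    finally show ?thesis by simp
  qed
  ultimately show ?thesis
    by (rule Lim_transform_eventually[OF _ eventually_sequentiallyI])
qed

lemma inv_sq_sum_le_lim: "inv_sq_sum n \<le> inv_sq_lim"
  by (rule incseq_le[OF incseq_inv_sq_sum inv_sq_sum_tendsto])

lemma inv_sq_sum_plus_inverse_antimono:
  assumes "1 \<le> n" and "n \<le> m"
  shows "inv_sq_sum m + 1 / real m \<le> inv_sq_sum n + 1 / real n"
  using assms(2)
proof (induction m rule: dec_induct)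
  case (step m)
  with assms have "1 \<le> m" by simp
  then have "1 / real (Suc m) ^ 2 \<le> 1 / (real m * real (Suc m))"
    by (intro divide_left_mono) (auto simp: power2_eq_square)
  also have "\<dots> = 1 / real m - 1 / real (Suc m)"
    using \<open>1 \<le> m\<close> by (simp add: field_simps)
  finally have "1 / real (Suc m) ^ 2 \<le> 1 / real m - 1 / real (Suc m)" .
  with step.IH \<open>1 \<le> m\<close> show ?case
    by (simp add: inv_sq_sum_Suc)
qed simp

lemma inv_sq_lim_le:
  assumes "1 \<le> n"
  shows "inv_sq_lim \<le> inv_sq_sum n + 1 / real n"
proof (rule LIMSEQ_le_const2[OF inv_sq_sum_tendsto], intro exI allI impI)
  fix m assume "n \<le> m"
  moreover have "0 \<le> 1 / real m"
    by simp
  ultimately show "inv_sq_sum m \<le> inv_sq_sum n + 1 / real n"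
    using inv_sq_sum_plus_inverse_antimono[OF assms, of m] by linarith
qed

lemma inv_sq_lim_bounds: "0 < inv_sq_lim" "inv_sq_lim \<le> 0.645"
proof -
  have "3\<^sup>2 < pi\<^sup>2"
    using pi_gt3 by (intro power_strict_mono) auto
  then show "0 < inv_sq_lim"
    by (simp add: inv_sq_lim_def)
  have "pi * pi \<le> 3.1416 * 3.1416"
    using pi_approx(2) by (intro mult_mono) auto
  then show "inv_sq_lim \<le> 0.645"
    unfolding inv_sq_lim_def power2_eq_square by simp
qed

section \<open>Bootstrapping the quadratic growth of the summatory totient function\<close>

lemma totient_sum_recursion:
  assumes "1 \<le> n"
  shows "real (totient_sum n)
    = real n * (real n + 1) / 2 - (\<Sum>d = 2..n. real (totient_sum (n div d)))"
proof -
  have "real n * (real n + 1) = 2 * (\<Sum>i = 1..n. real i)"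
    using double_gauss_sum_from_Suc_0[where 'a = real, of n] by simp
  also have "(\<Sum>i = 1..n. real i) = (\<Sum>d = 1..n. real (totient_sum (n div d)))"
    by (simp only: sum_totient_sum_div flip: of_nat_sum)
  also have "\<dots> = real (totient_sum n) + (\<Sum>d = 2..n. real (totient_sum (n div d)))"
    using assms by (simp add: sum.atLeast_Suc_atMost numeral_2_eq_2)
  finally show ?thesis by (simp add: field_simps)
qed

lemma sum_inverse_atLeast2:
  assumes "1 \<le> n"
  shows "(\<Sum>d = 2..n. 1 / real d) = harm n - 1"
  using assms by (simp add: harm_def sum.atLeast_Suc_atMost divide_inverse numeral_2_eq_2)

lemma sum_div_le_quadratic:
  fixes f :: "nat \<Rightarrow> real"
  assumes "0 \<le> a" "0 \<le> b" "1 \<le> n"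
    and f: "\<And>m. 1 \<le> m \<Longrightarrow> m \<le> n \<Longrightarrow> f m \<le> a * real m ^ 2 + b * real m"
  shows "(\<Sum>d = 2..n. f (n div d)) \<le> a * real n ^ 2 * inv_sq_sum n + b * real n * (harm n - 1)"
proof -
  have "f (n div d) \<le> a * real n ^ 2 * (1 / real d ^ 2) + b * real n * (1 / real d)"
    if d: "d \<in> {2..n}" for d
  proof -
    have "f (n div d) \<le> a * real (n div d) ^ 2 + b * real (n div d)"
      using d by (intro f) (auto simp: div_le_dividend div_greater_zero_iff Suc_le_eq)
    also have "\<dots> \<le> a * (real n / real d) ^ 2 + b * (real n / real d)"
      using assms of_nat_div_le_of_nat[of n d]
      by (intro add_mono mult_left_mono power_mono) auto
    finally show ?thesis
      by (simp add: power_divide)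
  qed
  then have "(\<Sum>d = 2..n. f (n div d))
      \<le> (\<Sum>d = 2..n. a * real n ^ 2 * (1 / real d ^ 2) + b * real n * (1 / real d))"
    by (rule sum_mono)
  also have "\<dots> = a * real n ^ 2 * inv_sq_sum n + b * real n * (harm n - 1)"
    by (simp only: sum.distrib inv_sq_sum_def sum_inverse_atLeast2[OF \<open>1 \<le> n\<close>]
        flip: sum_distrib_left)
  finally show ?thesis .
qed

lemma sum_div_ge_quadratic:
  fixes f :: "nat \<Rightarrow> real"
  assumes "0 \<le> a" "0 \<le> b" "1 \<le> n"
    and f: "\<And>m. 1 \<le> m \<Longrightarrow> m \<le> n \<Longrightarrow> a * real m ^ 2 - b * real m \<le> f m"
  shows "a * real n ^ 2 * inv_sq_sum n - (2 * a + b) * real n * (harm n - 1)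
    \<le> (\<Sum>d = 2..n. f (n div d))"
proof -
  have "a * real n ^ 2 * (1 / real d ^ 2) - (2 * a + b) * real n * (1 / real d) \<le> f (n div d)"
    if d: "d \<in> {2..n}" for d
  proof -
    define x where "x = real n / real d"
    define y where "y = real (n div d)"
    have "y \<le> x" "x - 1 \<le> y"
      unfolding x_def y_def using divide_nat_diff_div_nat_less_one[of n d]
      by (simp_all add: of_nat_div_le_of_nat)
    moreover have "1 \<le> x"
      using d by (simp add: x_def)
    ultimately have "(x - 1) ^ 2 \<le> y ^ 2"
      by (intro power_mono) auto
    then have "x ^ 2 - 2 * x \<le> y ^ 2"
      by (simp add: power2_diff)
    then have "a * (x ^ 2 - 2 * x) \<le> a * y ^ 2" "b * y \<le> b * x"
      using assms(1,2) \<open>y \<le> x\<close> by (simp_all add: mult_left_mono)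
    then have "a * x ^ 2 - (2 * a + b) * x \<le> a * y ^ 2 - b * y"
      by (simp add: algebra_simps)
    also have "\<dots> \<le> f (n div d)"
      using d unfolding y_def by (intro f) (auto simp: div_le_dividend div_greater_zero_iff Suc_le_eq)
    finally show ?thesis
      by (simp add: x_def power_divide)
  qed
  then have "(\<Sum>d = 2..n. a * real n ^ 2 * (1 / real d ^ 2) - (2 * a + b) * real n * (1 / real d))
      \<le> (\<Sum>d = 2..n. f (n div d))"
    by (rule sum_mono)
  moreover have "(\<Sum>d = 2..n. a * real n ^ 2 * (1 / real d ^ 2) - (2 * a + b) * real n * (1 / real d))
      = a * real n ^ 2 * inv_sq_sum n - (2 * a + b) * real n * (harm n - 1)"
    by (simp only: sum_subtractf inv_sq_sum_def sum_inverse_atLeast2[OF \<open>1 \<le> n\<close>]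
        flip: sum_distrib_left)
  ultimately show ?thesis by simp
qed

lemma one_le_harm: "1 \<le> n \<Longrightarrow> (1::real) \<le> harm n"
  using harm_mono[of 1 n] by (simp add: harm_def)

lemma totient_sum_ge_of_le:
  assumes "0 \<le> u" "0 \<le> K" "1 \<le> n"
    and upper: "\<And>m. 1 \<le> m \<Longrightarrow> real (totient_sum m) \<le> u * real m ^ 2 / 2 + K * real m * harm m ^ j"
  shows "(1 - inv_sq_lim * u) * real n ^ 2 / 2 - K * real n * harm n ^ Suc j \<le> real (totient_sum n)"
proof -
  have "(\<Sum>d = 2..n. real (totient_sum (n div d)))
      \<le> u / 2 * real n ^ 2 * inv_sq_sum n + K * harm n ^ j * real n * (harm n - 1)"
  proof (rule sum_div_le_quadratic)
    fix m assume m: "1 \<le> m" "m \<le> n"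
    have "harm m ^ j \<le> (harm n ^ j :: real)"
      using m by (intro power_mono harm_mono) (auto simp: harm_nonneg)
    then have "K * real m * harm m ^ j \<le> K * real m * harm n ^ j"
      using assms(2) by (intro mult_left_mono) auto
    moreover have "K * real m * harm n ^ j = K * harm n ^ j * real m"
      by simp
    ultimately show "real (totient_sum m) \<le> u / 2 * real m ^ 2 + K * harm n ^ j * real m"
      using upper[OF m(1)] by simp
  qed (use assms in \<open>auto simp: harm_nonneg\<close>)
  also have "\<dots> \<le> u / 2 * real n ^ 2 * inv_sq_lim + K * real n * harm n ^ Suc j"
  proof (rule add_mono)
    show "u / 2 * real n ^ 2 * inv_sq_sum n \<le> u / 2 * real n ^ 2 * inv_sq_lim"
      using assms(1) by (intro mult_left_mono inv_sq_sum_le_lim) auto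
    show "K * harm n ^ j * real n * (harm n - 1) \<le> K * real n * harm n ^ Suc j"
      using assms(2) by (simp add: mult_left_mono harm_nonneg algebra_simps)
  qed
  moreover have "real n ^ 2 \<le> real n * (real n + 1)"
    by (simp add: power2_eq_square algebra_simps)
  ultimately show ?thesis
    using totient_sum_recursion[OF assms(3)] by (simp add: algebra_simps)
qed

lemma totient_sum_le_of_ge:
  assumes "0 \<le> l" "l \<le> 1" "0 \<le> K" "1 \<le> n"
    and lower: "\<And>m. 1 \<le> m \<Longrightarrow> l * real m ^ 2 / 2 - K * real m * harm m ^ j \<le> real (totient_sum m)"
  shows "real (totient_sum n) \<le> (1 - inv_sq_lim * l) * real n ^ 2 / 2 + (K + 2) * real n * harm n ^ Suc j"
proof -
  define H where "H = (harm n :: real)"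
  have "1 \<le> H"
    using one_le_harm[OF assms(4)] by (simp add: H_def)
  have "l / 2 * real n ^ 2 * inv_sq_sum n - (2 * (l / 2) + K * H ^ j) * real n * (H - 1)
      \<le> (\<Sum>d = 2..n. real (totient_sum (n div d)))"
    unfolding H_def
  proof (rule sum_div_ge_quadratic)
    fix m assume m: "1 \<le> m" "m \<le> n"
    have "harm m ^ j \<le> (harm n ^ j :: real)"
      using m by (intro power_mono harm_mono) (auto simp: harm_nonneg)
    then have "K * real m * harm m ^ j \<le> K * real m * harm n ^ j"
      using assms(3) by (intro mult_left_mono) auto
    moreover have "K * real m * harm n ^ j = K * harm n ^ j * real m"
      by simp
    ultimately show "l / 2 * real m ^ 2 - K * harm n ^ j * real m \<le> real (totient_sum m)"
      using lower[OF m(1)] by simp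
  qed (use assms in \<open>auto simp: harm_nonneg\<close>)
  then have sum_ge: "l / 2 * real n ^ 2 * inv_sq_sum n - (l + K * H ^ j) * real n * (H - 1)
      \<le> (\<Sum>d = 2..n. real (totient_sum (n div d)))"
    by simp
  have tail: "l / 2 * real n ^ 2 * inv_sq_lim - l * real n / 2 \<le> l / 2 * real n ^ 2 * inv_sq_sum n"
  proof -
    have "l / 2 * real n ^ 2 * inv_sq_lim \<le> l / 2 * real n ^ 2 * (inv_sq_sum n + 1 / real n)"
      using assms(1) by (intro mult_left_mono inv_sq_lim_le assms(4)) auto
    then show ?thesis
      using assms(4) by (simp add: algebra_simps power2_eq_square)
  qed
  have coeff: "(l + K * H ^ j) * (H - 1) \<le> (1 + K) * H ^ Suc j"
  proof -
    have "H \<le> H ^ Suc j"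
      using power_increasing[of 1 "Suc j" H] \<open>1 \<le> H\<close> by simp
    moreover have "l * (H - 1) \<le> H - 1"
      using assms(1,2) \<open>1 \<le> H\<close> by (intro mult_left_le_one_le) auto
    moreover have "0 \<le> K * H ^ j"
      using assms(3) \<open>1 \<le> H\<close> by simp
    ultimately show ?thesis
      by (simp add: algebra_simps)
  qed
  have err: "(l + K * H ^ j) * real n * (H - 1) \<le> (1 + K) * real n * H ^ Suc j"
    using mult_left_mono[OF coeff, of "real n"] by (simp only: ac_simps of_nat_0_le_iff)
  have "1 \<le> H ^ Suc j"
    using \<open>1 \<le> H\<close> by (rule one_le_power)
  then have small: "real n / 2 + l * real n / 2 \<le> real n * H ^ Suc j"
    using assms(2) mult_right_mono[OF assms(2), of "real n"] mult_left_mono[of 1 "H ^ Suc j" "real n"]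
    by simp
  have "(1 - inv_sq_lim * l) * real n ^ 2 / 2 = real n ^ 2 / 2 - l / 2 * real n ^ 2 * inv_sq_lim"
    "(K + 2) * real n * H ^ Suc j = (1 + K) * real n * H ^ Suc j + real n * H ^ Suc j"
    "real n * (real n + 1) / 2 = real n ^ 2 / 2 + real n / 2"
    by (simp_all add: field_simps power2_eq_square)
  with totient_sum_recursion[OF assms(4)] sum_ge tail err small show ?thesis
    unfolding H_def by linarith
qed

(* The upper coefficients obtained by iterating u |-> 1 - sigma (1 - sigma u) from u = 1, where
   sigma = inv_sq_lim; they decrease geometrically to the fixed point 1 / (1 + sigma) = 6 / pi^2. *)
definition upper_coeff :: "nat \<Rightarrow> real" where
  "upper_coeff k = (1 + inv_sq_lim ^ (2 * k + 1)) / (1 + inv_sq_lim)"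

lemma inv_sq_lim_less_1: "inv_sq_lim < 1"
  using inv_sq_lim_bounds by simp

lemma upper_coeff_0: "upper_coeff 0 = 1"
  using inv_sq_lim_bounds by (simp add: upper_coeff_def)

lemma upper_coeff_Suc: "1 - inv_sq_lim * (1 - inv_sq_lim * upper_coeff k) = upper_coeff (Suc k)"
proof -
  have "1 + inv_sq_lim \<noteq> 0"
    using inv_sq_lim_bounds by simp
  then show ?thesis
    by (simp add: upper_coeff_def field_simps power2_eq_square)
qed

lemma upper_coeff_bounds: "0 \<le> upper_coeff k" "upper_coeff k \<le> 1"
proof -
  have "inv_sq_lim ^ (2 * k + 1) \<le> inv_sq_lim ^ 1"
    using inv_sq_lim_bounds inv_sq_lim_less_1 by (intro power_decreasing) auto
  then show "0 \<le> upper_coeff k" "upper_coeff k \<le> 1"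
    using inv_sq_lim_bounds by (simp_all add: upper_coeff_def)
qed

lemma lower_coeff_bounds: "0 \<le> 1 - inv_sq_lim * upper_coeff k" "1 - inv_sq_lim * upper_coeff k \<le> 1"
proof -
  have "inv_sq_lim * upper_coeff k \<le> 1 * 1"
    using inv_sq_lim_bounds inv_sq_lim_less_1 upper_coeff_bounds by (intro mult_mono) auto
  moreover have "0 \<le> inv_sq_lim * upper_coeff k"
    using inv_sq_lim_bounds upper_coeff_bounds by simp
  ultimately show "0 \<le> 1 - inv_sq_lim * upper_coeff k" "1 - inv_sq_lim * upper_coeff k \<le> 1"
    by simp_all
qed

lemma totient_sum_le_upper_coeff:
  assumes "1 \<le> m"
  shows "real (totient_sum m)
    \<le> upper_coeff k * real m ^ 2 / 2 + (1 + 2 * real k) * real m * harm m ^ (2 * k)"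
  using assms
proof (induction k arbitrary: m)
  case 0
  then show ?case
    using totient_sum_le[of m] by (simp add: upper_coeff_0)
next
  case (Suc k)
  have "0 \<le> 1 + 2 * real k"
    by simp
  have "(1 - inv_sq_lim * upper_coeff k) * real n ^ 2 / 2
      - (1 + 2 * real k) * real n * harm n ^ Suc (2 * k) \<le> real (totient_sum n)" if "1 \<le> n" for n
    using upper_coeff_bounds(1) \<open>0 \<le> 1 + 2 * real k\<close> that Suc.IH
    by (rule totient_sum_ge_of_le)
  with lower_coeff_bounds \<open>0 \<le> 1 + 2 * real k\<close> Suc.prems
  have "real (totient_sum m)
      \<le> (1 - inv_sq_lim * (1 - inv_sq_lim * upper_coeff k)) * real m ^ 2 / 2
        + (1 + 2 * real k + 2) * real m * harm m ^ Suc (Suc (2 * k))"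
    by (intro totient_sum_le_of_ge)
  moreover have "1 + 2 * real k + 2 = 1 + 2 * real (Suc k)" "Suc (Suc (2 * k)) = 2 * Suc k"
    by simp_all
  ultimately show ?case
    by (simp only: upper_coeff_Suc)
qed

lemma lower_coeff_5: "0.602 \<le> 1 - inv_sq_lim * upper_coeff 5"
proof -
  have "inv_sq_lim ^ 12 \<le> 0.645 ^ 12"
    using inv_sq_lim_bounds by (intro power_mono) auto
  also have "\<dots> \<le> 0.006"
    by (simp add: power_divide)
  finally have "0.602 * (1 + inv_sq_lim) \<le> 1 - inv_sq_lim ^ 12"
    using inv_sq_lim_bounds by simp
  moreover have "1 - inv_sq_lim * upper_coeff 5 = (1 - inv_sq_lim ^ 12) / (1 + inv_sq_lim)"
    using inv_sq_lim_bounds by (simp add: upper_coeff_def field_simps flip: power_Suc)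
  ultimately show ?thesis
    using inv_sq_lim_bounds by (simp add: le_divide_eq)
qed

lemma harm_le_1_plus_ln: "1 \<le> n \<Longrightarrow> harm n \<le> 1 + ln (real n)"
  using euler_mascheroni_sequence_decreasing[of 1 n] by (simp add: harm_def)

lemma totient_sum_lower_bound:
  assumes "1 \<le> n"
  shows "0.301 * real n ^ 2 - 11 * real n * (1 + ln (real n)) ^ 11 \<le> real (totient_sum n)"
proof -
  have "(1 - inv_sq_lim * upper_coeff 5) * real n ^ 2 / 2
      - (1 + 2 * real (5::nat)) * real n * harm n ^ Suc (2 * 5) \<le> real (totient_sum n)"
    using upper_coeff_bounds(1) _ assms totient_sum_le_upper_coeff
    by (rule totient_sum_ge_of_le) simp
  moreover have "0.602 * real n ^ 2 \<le> (1 - inv_sq_lim * upper_coeff 5) * real n ^ 2"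
    using lower_coeff_5 by (rule mult_right_mono) simp
  moreover have "harm n ^ 11 \<le> (1 + ln (real n)) ^ 11"
    using harm_le_1_plus_ln[OF assms] by (intro power_mono) (auto simp: harm_nonneg)
  then have "11 * real n * harm n ^ 11 \<le> 11 * real n * (1 + ln (real n)) ^ 11"
    by (intro mult_left_mono) auto
  ultimately show ?thesis
    by simp
qed

lemma eventually_totient_sum_gt:
  "\<forall>\<^sub>F n in sequentially. 3 / 10 * real n ^ 2 < real (totient_sum n)"
proof -
  have "\<forall>\<^sub>F n in sequentially. 11 * real n * (1 + ln (real n)) ^ 11 < 0.001 * real n ^ 2"
    by real_asymp
  with eventually_ge_at_top[of 1] show ?thesis
  proof eventually_elim
    case (elim n)
    then show ?case
      using totient_sum_lower_bound[of n] by simp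
  qed
qed

lemma size_seq_Qpos_arr_eq_totient_sum:
  assumes "1 \<le> n"
  shows "real (size_seq Qpos_arr n) = (real n + 1) * real (totient_sum n)"
proof -
  have "size_seq Qpos_arr n = (n + 1) * totient_sum n"
    using size_seq_Qpos_arr[OF assms] by (simp add: size_seq_I_arr totient_sum_def)
  then show ?thesis
    by (simp add: algebra_simps)
qed

lemma eventually_size_seq_Qpos_arr_gt:
  "\<forall>\<^sub>F n in sequentially. 3 / 10 * (real n ^ 3 + real n ^ 2) < real (size_seq Qpos_arr n)"
  using eventually_totient_sum_gt eventually_ge_at_top[of 1]
proof eventually_elim
  case (elim n)
  then have "(real n + 1) * (3 / 10 * real n ^ 2) < (real n + 1) * real (totient_sum n)"
    by (intro mult_strict_left_mono) auto
  then show ?case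
    using elim by (simp add: size_seq_Qpos_arr_eq_totient_sum algebra_simps power2_eq_square power3_eq_cube)
qed

lemma size_seq_Qpos_arr_less:
  assumes "6 \<le> n"
  shows "real (size_seq Qpos_arr n) < (real n ^ 3 - real n) / 2"
proof -
  have "real (2 * totient_sum n + 6) \<le> real (n * (n - 1))"
    using totient_sum_upper_bound[OF assms] by (simp only: of_nat_le_iff)
  then have "2 * real (totient_sum n) + 6 \<le> real n * (real n - 1)"
    using assms by (simp add: of_nat_diff)
  then have "(real n + 1) * (2 * real (totient_sum n)) < (real n + 1) * (real n * (real n - 1))"
    by (intro mult_strict_left_mono) auto
  then show ?thesis
    using assms by (simp add: size_seq_Qpos_arr_eq_totient_sum algebra_simps power3_eq_cube)
qed

lemma F_approx_size_seq_Qpos_arr_cube: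
  "F_approx (\<lambda>n. real (size_seq Qpos_arr n)) (\<lambda>n. real n ^ 3)"
  unfolding F_approx_def
proof (intro conjI)
  have "\<forall>\<^sub>F n in sequentially. real n ^ 3 \<le> 4 * real (size_seq Qpos_arr n)"
    using eventually_size_seq_Qpos_arr_gt
  proof eventually_elim
    case (elim n)
    have "0 \<le> real n ^ 2"
      by simp
    with elim show ?case
      unfolding distrib_left by linarith
  qed
  then show "\<exists>k::nat. 1 \<le> k \<and> (\<forall>\<^sub>F n in sequentially. real n ^ 3 \<le> real k * real (size_seq Qpos_arr n))"
    by (intro exI[of _ 4]) simp
  have "\<forall>\<^sub>F n in sequentially. real (size_seq Qpos_arr n) \<le> real n ^ 3"
    using eventually_ge_at_top[of 6]
  proof eventually_elim
    case (elim n)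
    have "0 \<le> real n"
      by simp
    with size_seq_Qpos_arr_less[OF elim] show ?case
      unfolding diff_divide_distrib by linarith
  qed
  then show "\<exists>k::nat. 1 \<le> k \<and> (\<forall>\<^sub>F n in sequentially. real (size_seq Qpos_arr n) \<le> real k * real n ^ 3)"
    by (intro exI[of _ 1]) simp
qed

theorem theorem11:
  shows "(\<forall>n\<ge>1. size_seq Qpos_arr n = (n + 1) * size_seq I_arr n)
    \<and> (\<forall>n\<ge>1. size_seq Qpos_arr n = (n + 1) * (\<Sum>i = 1..n. totient i))
    \<and> F_approx (\<lambda>n. real (size_seq Qpos_arr n)) (\<lambda>n. real n ^ 3)
    \<and> F_less (\<lambda>n. 3 / 10 * (real n ^ 3 + real n ^ 2)) (\<lambda>n. real (size_seq Qpos_arr n))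
    \<and> F_less (\<lambda>n. real (size_seq Qpos_arr n)) (\<lambda>n. (real n ^ 3 - real n) / 2)"
proof -
  have "\<forall>\<^sub>F n in sequentially. real (size_seq Qpos_arr n) < (real n ^ 3 - real n) / 2"
    using eventually_ge_at_top[of 6] by eventually_elim (rule size_seq_Qpos_arr_less)
  then show ?thesis
    using eventually_size_seq_Qpos_arr_gt F_approx_size_seq_Qpos_arr_cube
    unfolding F_less_def by (simp add: size_seq_Qpos_arr size_seq_I_arr)
qed

end
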